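(* Let $d\ge1$ and let $(S_t)_{t\in\mathbb{R}}$ be a one-parameter group of real orthogonal linear operators on $\mathbb{R}^d\otimes\mathbb{R}^d$, with associated maps $\mathcal{S}_t(X)=S_tXS_t^{\top}$ on real $d^2\times d^2$ matrices. Suppose $\mathcal{S}_t(\rho\otimes\rho)=\rho\otimes\rho$ for every $t\in\mathbb{R}$ and every real $d\times d$ density matrix $\rho$ (real symmetric, positive semidefinite, trace one). Then $\mathcal{S}_t$ is the identity map for every $t\in\mathbb{R}$.
   Context: This concerns real quantum theory, in which states of a $d$-level system are real density matrices on $\mathbb{R}^d$ and reversible transformations are conjugations by orthogonal matrices. *)

theory Defs
  imports "HOL-Analysis.Analysis"
begin

text \<open>Real d x d matrices are indexed by a finite type 'n (d = CARD('n)).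
  The tensor product space R^d (x) R^d is indexed by 'n \<times> 'n.\<close>

definition real_density_matrix :: "real^'n^'n \<Rightarrow> bool" where
  "real_density_matrix \<rho> \<longleftrightarrow>
     transpose \<rho> = \<rho> \<and>
     (\<forall>x::real^'n. 0 \<le> x \<bullet> (\<rho> *v x)) \<and>
     trace \<rho> = 1"

definition kron :: "real^'n^'m \<Rightarrow> real^'q^'p \<Rightarrow> real^('n \<times> 'q)^('m \<times> 'p)" where
  "kron A B = (\<chi> r c. A $ fst r $ fst c * B $ snd r $ snd c)"

definition orth_one_param_group :: "(real \<Rightarrow> real^'m^'m) \<Rightarrow> bool" where
  "orth_one_param_group S \<longleftrightarrow>
     S 0 = mat 1 \<and>
     (\<forall>s t. S (s + t) = S s ** S t) \<and>
     (\<forall>t. orthogonal_matrix (S t)) \<and>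
     continuous_on UNIV S"

end

theory Submission
  imports Defs
begin

text \<open>An orthogonal R that fixes every \<rho> \<otimes> \<rho> under conjugation commutes with it.
  For a pure state \<rho> = v v^T / |v|^2 this makes v \<otimes> v an eigenvector of R, with
  eigenvalue \<plusminus>1; in particular R e_ii = \<plusminus>e_ii. For i \<noteq> j the state
  diag(1/3 at i, 2/3 at j) shows that R preserves the plane spanned by e_ij and e_ji.
  Inside it, v = e_i + e_j makes e_ij + e_ji an eigenvector with eigenvalue \<plusminus>1, and
  then e_ij - e_ji is one too, being orthogonal to it. So R^2 = 1, and
  S t = S (t/2)^2 = 1.\<close>

definition outer :: "real^'n \<Rightarrow> real^'n^'n" where
  "outer v = (\<chi> a b. v $ a * v $ b)"

definition tensor :: "real^'n \<Rightarrow> real^'m \<Rightarrow> real^('n \<times> 'm)" where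
  "tensor u v = (\<chi> k. u $ fst k * v $ snd k)"

definition diagonal_mat :: "('n \<Rightarrow> real) \<Rightarrow> real^'n^'n" where
  "diagonal_mat p = (\<chi> a b. if a = b then p a else 0)"

lemma matrix_vector_mult_axis_component: "(A *v axis l 1) $ k = A $ k $ (l::'n::finite)"
  for A :: "real^'n^'m"
  by (simp add: matrix_vector_mult_basis column_def)

lemma kron_scaleR: "kron (a *\<^sub>R A) (b *\<^sub>R B) = (a * b) *\<^sub>R kron A B"
  by (simp add: kron_def vec_eq_iff)

lemma kron_outer: "kron (outer u) (outer v) = outer (tensor u v)"
  by (simp add: kron_def outer_def tensor_def vec_eq_iff mult_ac)

lemma kron_diagonal_mat:
  "kron (diagonal_mat p) (diagonal_mat q) = diagonal_mat (\<lambda>k. p (fst k) * q (snd k))"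
  by (auto simp: kron_def diagonal_mat_def vec_eq_iff prod_eq_iff)

lemma tensor_axis: "tensor (axis i 1) (axis j 1) = axis (i, j) (1::real)"
  by (auto simp: tensor_def vec_eq_iff axis_def)

lemma tensor_add_left: "tensor (u + u') v = tensor u v + tensor u' v"
  by (simp add: tensor_def vec_eq_iff algebra_simps)

lemma tensor_add_right: "tensor u (v + v') = tensor u v + tensor u v'"
  by (simp add: tensor_def vec_eq_iff algebra_simps)

lemma outer_mult_vec: "outer w *v y = (w \<bullet> y) *\<^sub>R w"
  by (simp add: outer_def matrix_vector_mult_def inner_vec_def vec_eq_iff
      sum_distrib_left mult_ac)

lemma diagonal_mat_mult_vec: "diagonal_mat p *v y = (\<chi> k. p k * y $ k)"
proof -
  have "(if k = l then p k else 0) * y $ l = (if k = l then p k * y $ k else 0)" for k l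
    by simp
  then show ?thesis
    by (simp add: diagonal_mat_def matrix_vector_mult_def vec_eq_iff)
qed

lemma real_density_matrix_pure_state:
  fixes v :: "real^'n"
  assumes "v \<noteq> 0"
  shows "real_density_matrix (inverse (v \<bullet> v) *\<^sub>R outer v)"
proof -
  have "x \<bullet> (outer v *v x) = (v \<bullet> x)\<^sup>2" for x
    by (simp add: outer_mult_vec power2_eq_square inner_commute)
  moreover have "trace (outer v) = v \<bullet> v"
    by (simp add: trace_def outer_def inner_vec_def)
  moreover have "trace (c *\<^sub>R A) = c * trace A" for c and A :: "real^'n^'n"
    by (simp add: trace_def sum_distrib_left)
  moreover have "transpose (outer v) = outer v"
    by (simp add: outer_def transpose_def vec_eq_iff mult.commute)
  ultimately show ?thesis
    using assms
    by (simp add: real_density_matrix_def transpose_scalar scaleR_matrix_vector_assoc[symmetric])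
qed

lemma real_density_matrix_diagonal_mat:
  assumes "\<And>a. 0 \<le> p a" and "sum p UNIV = 1"
  shows "real_density_matrix (diagonal_mat p)"
proof -
  have "x \<bullet> (diagonal_mat p *v x) = (\<Sum>a\<in>UNIV. p a * (x $ a)\<^sup>2)" for x
    by (simp add: diagonal_mat_mult_vec inner_vec_def power2_eq_square mult_ac)
  then show ?thesis
    using assms
    by (auto simp: real_density_matrix_def diagonal_mat_def transpose_def vec_eq_iff trace_def
        intro!: sum_nonneg)
qed

lemma orthogonal_matrix_inner:
  fixes R :: "real^'n^'n"
  assumes "orthogonal_matrix R"
  shows "(R *v x) \<bullet> (R *v y) = x \<bullet> y"
  using assms orthogonal_transformation_matrix[of "(*v) R"]
  by (simp add: orthogonal_transformation_def)

lemma orthogonal_matrix_eigenvalue_square: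
  fixes R :: "real^'n^'n"
  assumes "orthogonal_matrix R" and "R *v x = c *\<^sub>R x" and "x \<noteq> 0"
  shows "c\<^sup>2 = 1"
proof -
  have "c\<^sup>2 * (x \<bullet> x) = x \<bullet> x"
    using orthogonal_matrix_inner[OF assms(1), of x x] assms(2) by (simp add: power2_eq_square)
  then show ?thesis
    using assms(3) by simp
qed

lemma square_fixes_eigenvector:
  fixes R :: "real^'n^'n"
  assumes "R *v x = c *\<^sub>R x" and "c\<^sup>2 = 1"
  shows "R *v (R *v x) = x"
  using assms by (simp add: matrix_vector_mult_scaleR power2_eq_square)

lemma orthogonal_conj_eq_imp_commute:
  assumes "orthogonal_matrix R" and "R ** K ** transpose R = K"
  shows "R ** K = K ** R"
proof -
  have "R ** K = R ** K ** (transpose R ** R)"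
    using assms(1) by (simp add: orthogonal_matrix_def)
  also have "\<dots> = K ** R"
    using assms(2) by (simp add: matrix_mul_assoc)
  finally show ?thesis .
qed

lemma commute_outer_eigenvector:
  assumes "R ** outer w = outer w ** R" and "w \<noteq> 0"
  shows "R *v w = ((w \<bullet> (R *v w)) / (w \<bullet> w)) *\<^sub>R w"
proof -
  have "(w \<bullet> w) *\<^sub>R (R *v w) = (w \<bullet> (R *v w)) *\<^sub>R w"
    using arg_cong[OF assms(1), of "\<lambda>M. M *v w"]
    by (simp add: matrix_vector_mul_assoc[symmetric] outer_mult_vec matrix_vector_mult_scaleR)
  then have "inverse (w \<bullet> w) *\<^sub>R ((w \<bullet> w) *\<^sub>R (R *v w))
      = inverse (w \<bullet> w) *\<^sub>R ((w \<bullet> (R *v w)) *\<^sub>R w)"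
    by simp
  then show ?thesis
    using assms(2) by (simp add: divide_inverse_commute)
qed

lemma commute_diagonal_mat_entry:
  fixes R :: "real^'n^'n"
  assumes "R ** diagonal_mat p = diagonal_mat p ** R" and "R $ k $ l \<noteq> 0"
  shows "p k = p l"
proof -
  have "R $ k $ l * p l = p k * R $ k $ l"
    using arg_cong[OF assms(1), of "\<lambda>M. M $ k $ l"]
    by (simp add: matrix_matrix_mult_def diagonal_mat_def if_distrib if_distribR cong: if_cong)
  then show ?thesis
    using assms(2) by simp
qed

locale product_state_symmetry =
  fixes R :: "real^('n::finite \<times> 'n)^('n \<times> 'n)"
  assumes orthogonal: "orthogonal_matrix R"
    and fixes_product_states:
      "\<And>\<rho>::real^'n^'n. real_density_matrix \<rho> \<Longrightarrow> R ** kron \<rho> \<rho> ** transpose R = kron \<rho> \<rho>"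
begin

lemma commute_product_state:
  "real_density_matrix \<rho> \<Longrightarrow> R ** kron \<rho> \<rho> = kron \<rho> \<rho> ** R"
  using orthogonal fixes_product_states by (rule orthogonal_conj_eq_imp_commute)

lemma tensor_square_eigenvector:
  fixes v :: "real^'n"
  assumes "v \<noteq> 0"
  shows "\<exists>c. c\<^sup>2 = 1 \<and> R *v tensor v v = c *\<^sub>R tensor v v"
proof -
  let ?w = "tensor v v"
  have "?w $ (i, i) \<noteq> 0" if "v $ i \<noteq> 0" for i
    using that by (simp add: tensor_def)
  then have w: "?w \<noteq> 0"
    using assms by (metis vec_eq_iff zero_index)
  have "kron (inverse (v \<bullet> v) *\<^sub>R outer v) (inverse (v \<bullet> v) *\<^sub>R outer v)
      = inverse (v \<bullet> v) ^ 2 *\<^sub>R outer ?w"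
    by (simp add: kron_scaleR kron_outer power2_eq_square)
  then have "inverse (v \<bullet> v) ^ 2 *\<^sub>R (R ** outer ?w) = inverse (v \<bullet> v) ^ 2 *\<^sub>R (outer ?w ** R)"
    using commute_product_state[OF real_density_matrix_pure_state[OF assms]]
    by (simp add: matrix_scalar_ac scalar_matrix_assoc)
  then have "R ** outer ?w = outer ?w ** R"
    using assms by simp
  then have "R *v ?w = ((?w \<bullet> (R *v ?w)) / (?w \<bullet> ?w)) *\<^sub>R ?w"
    using w by (rule commute_outer_eigenvector)
  then show ?thesis
    using orthogonal_matrix_eigenvalue_square[OF orthogonal _ w] by blast
qed

lemma entry_outside_swap_pair:
  assumes "i \<noteq> j" and "k \<noteq> (i, j)" and "k \<noteq> (j, i)"
  shows "R $ k $ (i, j) = 0"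
proof (rule ccontr)
  \<comment> \<open>the product weights p a * p b equal 2/9 exactly when {a, b} = {i, j}\<close>
  define p where "p a = (if a = i then 1/3 else 0) + (if a = j then 2/3 else (0::real))" for a
  have "real_density_matrix (diagonal_mat p)"
    by (rule real_density_matrix_diagonal_mat) (simp_all add: p_def sum.distrib)
  from commute_product_state[OF this]
  have "R ** diagonal_mat (\<lambda>k. p (fst k) * p (snd k))
      = diagonal_mat (\<lambda>k. p (fst k) * p (snd k)) ** R"
    by (simp add: kron_diagonal_mat)
  moreover assume "R $ k $ (i, j) \<noteq> 0"
  ultimately have "p (fst k) * p (snd k) = p i * p j"
    using commute_diagonal_mat_entry[of R "\<lambda>k. p (fst k) * p (snd k)" k "(i, j)"] by simp
  then show False
    using assms by (cases k) (auto simp: p_def split: if_splits)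
qed

lemma swap_pair_column:
  assumes "i \<noteq> j" and "k \<noteq> (i, j)" and "k \<noteq> (j, i)"
  shows "(R *v axis (i, j) 1) $ k = 0" and "(R *v axis (j, i) 1) $ k = 0"
  using assms entry_outside_swap_pair[of i j k] entry_outside_swap_pair[of j i k]
  by (auto simp: matrix_vector_mult_axis_component)

lemma diagonal_axis_eigenvector: "\<exists>a. a\<^sup>2 = 1 \<and> R *v axis (i, i) 1 = a *\<^sub>R axis (i, i) 1"
  using tensor_square_eigenvector[of "axis i 1"] by (simp add: tensor_axis)

lemma symmetric_pair_eigenvector:
  assumes "i \<noteq> j"
  shows "\<exists>c. c\<^sup>2 = 1 \<and>
    R *v (axis (i, j) 1 + axis (j, i) 1) = c *\<^sub>R (axis (i, j) 1 + axis (j, i) 1)"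
proof -
  define s where "s = axis (i, j) 1 + axis (j, i) (1::real)"
  obtain a where a: "R *v axis (i, i) 1 = a *\<^sub>R axis (i, i) 1"
    using diagonal_axis_eigenvector by blast
  obtain b where b: "R *v axis (j, j) 1 = b *\<^sub>R axis (j, j) 1"
    using diagonal_axis_eigenvector by blast
  have "(axis i 1 + axis j 1) $ i = (1::real)"
    using assms by (simp add: axis_def)
  then have "axis i 1 + axis j 1 \<noteq> (0::real^'n)"
    by (metis zero_index zero_neq_one)
  then obtain c where c: "c\<^sup>2 = 1" and "R *v tensor (axis i 1 + axis j 1) (axis i 1 + axis j 1)
      = c *\<^sub>R tensor (axis i 1 + axis j 1) (axis i 1 + axis j 1)"
    using tensor_square_eigenvector by blast
  then have eq: "a *\<^sub>R axis (i, i) 1 + b *\<^sub>R axis (j, j) 1 + R *v s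
      = c *\<^sub>R (axis (i, i) 1 + axis (j, j) 1 + s)"
    using a b by (simp add: s_def tensor_add_left tensor_add_right tensor_axis algebra_simps)
  have "(R *v s) $ (i, i) = 0" and "(R *v s) $ (j, j) = 0"
    using assms swap_pair_column by (simp_all add: s_def matrix_vector_right_distrib)
  moreover have "s $ (i, i) = 0" and "s $ (j, j) = 0"
    using assms by (simp_all add: s_def axis_def)
  ultimately have "a = c" and "b = c"
    using assms arg_cong[OF eq, of "\<lambda>x. x $ (i, i)"] arg_cong[OF eq, of "\<lambda>x. x $ (j, j)"]
    by (simp_all add: axis_def)
  with eq have "R *v s = c *\<^sub>R s"
    by (simp add: algebra_simps)
  then show ?thesis
    using c s_def by blast
qed

lemma antisymmetric_pair_eigenvector:
  assumes "i \<noteq> j"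
  shows "\<exists>\<mu>. \<mu>\<^sup>2 = 1 \<and>
    R *v (axis (i, j) 1 - axis (j, i) 1) = \<mu> *\<^sub>R (axis (i, j) 1 - axis (j, i) 1)"
proof -
  define s where "s = axis (i, j) 1 + axis (j, i) (1::real)"
  define d where "d = axis (i, j) 1 - axis (j, i) (1::real)"
  obtain c where c: "c\<^sup>2 = 1" and Rs: "R *v s = c *\<^sub>R s"
    using symmetric_pair_eigenvector[OF assms] s_def by blast
  \<comment> \<open>d is not of the form v \<otimes> v; it is reached through its orthogonality to s\<close>
  have "c * ((R *v d) \<bullet> s) = (R *v d) \<bullet> (R *v s)"
    using Rs by simp
  also have "\<dots> = d \<bullet> s"
    by (rule orthogonal_matrix_inner[OF orthogonal])
  also have "\<dots> = 0"
    using assms by (simp add: d_def s_def inner_diff_left inner_add_right inner_axis_axis)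
  finally have "(R *v d) \<bullet> s = 0"
    using c by auto
  then have antisym: "(R *v d) $ (j, i) = - (R *v d) $ (i, j)"
    by (simp add: s_def inner_add_right inner_axis)
  have outside: "(R *v d) $ k = 0" if "k \<noteq> (i, j)" and "k \<noteq> (j, i)" for k
    using assms that swap_pair_column by (simp add: d_def matrix_vector_mult_diff_distrib)
  have "R *v d = (R *v d) $ (i, j) *\<^sub>R d"
    unfolding vec_eq_iff
  proof
    fix k
    show "(R *v d) $ k = ((R *v d) $ (i, j) *\<^sub>R d) $ k"
      using assms antisym outside[of k] by (auto simp: d_def axis_def)
  qed
  moreover have "d $ (i, j) = 1"
    using assms by (simp add: d_def axis_def)
  then have "d \<noteq> 0"
    by (metis zero_index zero_neq_one)
  ultimately show ?thesis
    using orthogonal_matrix_eigenvalue_square[OF orthogonal] d_def by blast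
qed

lemma square_fixes_axis: "R *v (R *v axis k 1) = axis k 1"
proof (cases k)
  case (Pair i j)
  show ?thesis
  proof (cases "i = j")
    case True
    then show ?thesis
      using Pair diagonal_axis_eigenvector square_fixes_eigenvector by metis
  next
    case False
    let ?s = "axis (i, j) 1 + axis (j, i) (1::real)"
    let ?d = "axis (i, j) 1 - axis (j, i) (1::real)"
    have "R *v (R *v ?s) = ?s" and "R *v (R *v ?d) = ?d"
      using symmetric_pair_eigenvector[OF False] antisymmetric_pair_eigenvector[OF False]
        square_fixes_eigenvector by metis+
    then have "R *v (R *v ?s) + R *v (R *v ?d) = ?s + ?d"
      by simp
    then have "2 *\<^sub>R (R *v (R *v axis (i, j) 1)) = 2 *\<^sub>R axis (i, j) 1"
      by (simp add: matrix_vector_right_distrib matrix_vector_mult_diff_distrib scaleR_2)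
    then show ?thesis
      using Pair by simp
  qed
qed

lemma square_eq_mat_1: "R ** R = mat 1"
proof -
  have "(R ** R) $ a $ b = (R *v (R *v axis b 1)) $ a" for a b
    by (simp add: matrix_vector_mul_assoc matrix_vector_mult_axis_component)
  also have "\<dots> a b = mat 1 $ a $ b" for a b
    by (simp only: square_fixes_axis) (simp add: mat_def axis_def)
  finally have "(R ** R) $ a $ b = mat 1 $ a $ b" for a b .
  then show ?thesis
    by (simp add: vec_eq_iff)
qed

end

theorem mainTheorem7:
  fixes S :: "real \<Rightarrow> real^('n::finite \<times> 'n)^('n \<times> 'n)"
  assumes "orth_one_param_group S"
    and "\<And>t (\<rho>::real^'n^'n). real_density_matrix \<rho> \<Longrightarrow>
            S t ** kron \<rho> \<rho> ** transpose (S t) = kron \<rho> \<rho>"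
  shows "\<forall>t. \<forall>X :: real^('n \<times> 'n)^('n \<times> 'n). S t ** X ** transpose (S t) = X"
proof (intro allI)
  fix t and X :: "real^('n \<times> 'n)^('n \<times> 'n)"
  have "orthogonal_matrix (S (t/2))" and half: "S t = S (t/2) ** S (t/2)"
    using assms(1) unfolding orth_one_param_group_def by (metis field_sum_of_halves)+
  then interpret product_state_symmetry "S (t/2)"
    using assms(2) by unfold_locales
  have "S t = mat 1"
    using half square_eq_mat_1 by simp
  then show "S t ** X ** transpose (S t) = X"
    by simp
qed

end
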